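(* Let $0<q<1$ and let $s_1,\dots,s_n$ be positive integers with $s_j>1$ for some $j$. Then \[ T[s_1,\dots,s_n]-T[s_2,\dots,s_n,s_1] = \zeta[s_1+1,s_2,\dots,s_n] - \sum_{k=0}^{s_1-2}\zeta[s_1-k,s_2,\dots,s_n,k+1], \] where the sum on the right is zero if $s_1=1$.
   Context: Fix $0<q<1$ and $[x]_q := (1-q^x)/(1-q)$. For positive integers $t_1,\dots,t_N$ with $t_1>1$, $\zeta[t_1,\dots,t_N] := \sum_{k_1>\cdots>k_N>0}\prod_{j=1}^N q^{(t_j-1)k_j}/[k_j]_q^{t_j}$. For positive integers $s_1,\dots,s_n$ define \[ T[s_1,\dots,s_n] := \sum_{k_1>\cdots>k_n>k_{n+1}\ge 0}\frac{q^{k_1-k_{n+1}}}{[k_1-k_{n+1}]_q}\prod_{j=1}^n\frac{q^{(s_j-1)k_j}}{[k_j]_q^{s_j}} \] (sum over integers satisfying the indicated inequalities); it is finite when some $s_j>1$. *)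

theory Defs
  imports "HOL-Analysis.Analysis"
begin

definition qint :: "real \<Rightarrow> nat \<Rightarrow> real" where
  "qint q x = (1 - q ^ x) / (1 - q)"

definition qzeta :: "real \<Rightarrow> nat list \<Rightarrow> real" where
  "qzeta q t = (\<Sum>\<^sub>\<infinity> ks \<in> {ks. length ks = length t \<and> sorted_wrt (>) ks \<and> (\<forall>k\<in>set ks. 0 < k)}.
      \<Prod>j<length t. q ^ ((t ! j - 1) * (ks ! j)) / qint q (ks ! j) ^ (t ! j))"

definition qT :: "real \<Rightarrow> nat list \<Rightarrow> real" where
  "qT q s = (\<Sum>\<^sub>\<infinity> ks \<in> {ks. length ks = length s + 1 \<and> sorted_wrt (>) ks}.
      q ^ (hd ks - last ks) / qint q (hd ks - last ks) *
      (\<Prod>j<length s. q ^ ((s ! j - 1) * (ks ! j)) / qint q (ks ! j) ^ (s ! j)))"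

end

(*
  All terms are nonnegative, so the series are taken as integrals over counting measures
  with values in ennreal, where they can be split, reindexed and interchanged freely;
  finiteness is only needed to cancel terms and to pass back to the real-valued sums.

  Write f_s(k) = q^((s-1)k)/[k]^s and g(a) = q^a/[a]. Everything rests on the
  partial-fraction identity, valid for k > l > 0,
    f_s(k) g(k-l) + (sum j<s-1. f_(s-j)(k) f_(j+1)(l)) + f_s(l) g(k) = f_s(l) g(k-l).
  Summed over k > L, the last term on the left telescopes against the right-hand side,
  leaving sum p<l. f_s(l) g(L-p); summing again over 0 < l < m gives an identity between
  four double sums. With the middle indices k_2 > ... > k_n fixed, L = k_2 and m = k_n,
  these are exactly the inner sums of T[s_1,...,s_n], of the zeta[s_1-j,s_2,...,s_n,j+1],
  of zeta[s_1+1,s_2,...,s_n] and of T[s_2,...,s_n,s_1]. For n = 1 there are no middle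
  indices; summing the identity over l = L > 0 instead gives the depth-two sum formula
  zeta[s+1] = sum j<s-1. zeta[s-j,j+1], and the two T-values coincide.
*)
theory Submission
  imports Defs
begin

section \<open>Nonnegative sums over countable sets\<close>

lemma infsum_eq_enn2real_nn_integral:
  fixes f :: "'a \<Rightarrow> real"
  assumes "\<And>x. x \<in> A \<Longrightarrow> 0 \<le> f x"
    and "(\<integral>\<^sup>+x. ennreal (f x) \<partial>count_space A) \<noteq> \<infinity>"
  shows "infsum f A = enn2real (\<integral>\<^sup>+x. ennreal (f x) \<partial>count_space A)"
proof -
  have "integrable (count_space A) f"
    by (rule integrableI_nn_integral_finite[where x = "enn2real (\<integral>\<^sup>+x. ennreal (f x) \<partial>count_space A)"])
      (use assms in \<open>auto simp: AE_count_space ennreal_enn2real_if\<close>)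
  then have "infsetsum f A = infsum f A"
    by (simp add: infsetsum_infsum abs_summable_on_def)
  moreover have "infsetsum f A = enn2real (\<integral>\<^sup>+x. ennreal (f x) \<partial>count_space A)"
    using assms by (intro infsetsum_conv_nn_integral) auto
  ultimately show ?thesis by simp
qed

lemma nn_integral_count_space_reindex:
  assumes "\<And>a. a \<in> A \<Longrightarrow> \<psi> (\<phi> a) = a" "\<And>b. b \<in> B \<Longrightarrow> \<phi> (\<psi> b) = b"
    and "\<And>a. a \<in> A \<Longrightarrow> \<phi> a \<in> B" "\<And>b. b \<in> B \<Longrightarrow> \<psi> b \<in> A"
  shows "(\<integral>\<^sup>+x. f x \<partial>count_space B) = (\<integral>\<^sup>+a. f (\<phi> a) \<partial>count_space A)"
proof -
  have "bij_betw \<phi> A B"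
    by (rule bij_betw_byWitness[where f'=\<psi>]) (use assms in auto)
  then show ?thesis by (rule nn_integral_bij_count_space[symmetric])
qed

lemma nn_integral_count_space_Sigma:
  fixes f :: "'a::countable \<times> 'b::countable \<Rightarrow> ennreal"
  shows "(\<integral>\<^sup>+z. f z \<partial>count_space (Sigma A B))
       = (\<integral>\<^sup>+x. \<integral>\<^sup>+y. f (x, y) \<partial>count_space (B x) \<partial>count_space A)"
proof -
  let ?fiber = "\<lambda>x z. f z * indicator {z. fst z = x} z"
  have fiber: "(\<integral>\<^sup>+y. f (x, y) \<partial>count_space (B x)) = (\<integral>\<^sup>+z. ?fiber x z \<partial>count_space (Sigma A B))"
    if "x \<in> A" for x
  proof -
    have "(\<integral>\<^sup>+z. ?fiber x z \<partial>count_space (Sigma A B))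
        = (\<integral>\<^sup>+z. f z \<partial>count_space {z \<in> Sigma A B. fst z = x})"
      by (auto simp: nn_integral_count_space_indicator intro!: nn_integral_cong split: split_indicator)
    also have "\<dots> = (\<integral>\<^sup>+y. f (x, y) \<partial>count_space (B x))"
      by (rule nn_integral_count_space_reindex[where \<psi> = snd]) (use that in auto)
    finally show ?thesis by simp
  qed
  have "(\<integral>\<^sup>+x. \<integral>\<^sup>+y. f (x, y) \<partial>count_space (B x) \<partial>count_space A)
      = (\<integral>\<^sup>+x. \<integral>\<^sup>+z. ?fiber x z \<partial>count_space (Sigma A B) \<partial>count_space A)"
    by (intro nn_integral_cong) (simp add: fiber)
  also have "\<dots> = (\<integral>\<^sup>+z. \<integral>\<^sup>+x. ?fiber x z \<partial>count_space A \<partial>count_space (Sigma A B))"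
    by (rule nn_integral_count_space_nn_integral[symmetric]) auto
  also have "\<dots> = (\<integral>\<^sup>+z. f z \<partial>count_space (Sigma A B))"
  proof (intro nn_integral_cong)
    fix z assume "z \<in> space (count_space (Sigma A B))"
    then show "(\<integral>\<^sup>+x. ?fiber x z \<partial>count_space A) = f z"
      by (subst nn_integral_count_space'[where A = "{fst z}"]) (auto split: split_indicator)
  qed
  finally show ?thesis by simp
qed

lemma nn_integral_count_space_Un:
  assumes "A \<inter> B = {}"
  shows "(\<integral>\<^sup>+x. f x \<partial>count_space (A \<union> B))
       = (\<integral>\<^sup>+x. f x \<partial>count_space A) + (\<integral>\<^sup>+x. f x \<partial>count_space B)"
proof -
  have "(\<integral>\<^sup>+x. f x \<partial>count_space (A \<union> B))
      = (\<integral>\<^sup>+x. f x * indicator A x + f x * indicator B x \<partial>count_space UNIV)"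
    using assms by (auto simp: nn_integral_count_space_indicator intro!: nn_integral_cong
        split: split_indicator)
  then show ?thesis
    by (simp add: nn_integral_add nn_integral_count_space_indicator)
qed

lemma nn_integral_count_space_mono_set:
  assumes "A \<subseteq> B"
  shows "(\<integral>\<^sup>+x. f x \<partial>count_space A) \<le> (\<integral>\<^sup>+x. f x \<partial>count_space B)"
proof -
  have "(\<integral>\<^sup>+x. f x * indicator A x \<partial>count_space UNIV) \<le> (\<integral>\<^sup>+x. f x * indicator B x \<partial>count_space UNIV)"
    using assms by (intro nn_integral_mono) (auto split: split_indicator)
  then show ?thesis
    by (simp add: nn_integral_count_space_indicator)
qed

lemma nn_integral_count_space_shift:
  fixes h :: "nat \<Rightarrow> ennreal"
  assumes "l \<le> L"
  shows "(\<integral>\<^sup>+k. h (k - l) \<partial>count_space {L<..})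
       = (\<Sum>p<l. h (L - p)) + (\<integral>\<^sup>+k. h k \<partial>count_space {L<..})"
proof -
  have "(\<integral>\<^sup>+k. h (k - l) \<partial>count_space {L<..}) = (\<integral>\<^sup>+k. h k \<partial>count_space {L-l<..})"
    by (rule nn_integral_count_space_reindex[where \<psi> = "\<lambda>k. k + l", symmetric]) (use assms in auto)
  also have "{L-l<..} = {L-l<..L} \<union> {L<..}"
    using assms by auto
  also have "(\<integral>\<^sup>+k. h k \<partial>count_space ({L-l<..L} \<union> {L<..}))
      = (\<Sum>k\<in>{L-l<..L}. h k) + (\<integral>\<^sup>+k. h k \<partial>count_space {L<..})"
    by (subst nn_integral_count_space_Un) (auto simp: nn_integral_count_space_finite)
  also have "(\<Sum>k\<in>{L-l<..L}. h k) = (\<Sum>p<l. h (L - p))"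
    by (rule sum.reindex_bij_witness[where i = "\<lambda>p. L - p" and j = "\<lambda>k. L - k"]) (use assms in auto)
  finally show ?thesis .
qed

lemma nn_integral_geometric:
  fixes r :: real
  assumes "0 \<le> r" "r < 1"
  shows "(\<integral>\<^sup>+k. ennreal (r ^ k) \<partial>count_space UNIV) = ennreal (1 / (1 - r))"
  using assms by (simp add: nn_integral_count_space_nat suminf_ennreal_eq geometric_sums)

lemma nn_integral_power_less_top:
  fixes r :: real
  assumes "0 \<le> r" "r < 1"
  shows "(\<integral>\<^sup>+k. ennreal (r ^ k) \<partial>count_space (A::nat set)) < \<infinity>"
proof -
  have "(\<integral>\<^sup>+k. ennreal (r ^ k) \<partial>count_space A) \<le> (\<integral>\<^sup>+k. ennreal (r ^ k) \<partial>count_space UNIV)"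
    by (rule nn_integral_count_space_mono_set) simp
  also have "\<dots> < \<infinity>"
    using assms by (simp add: nn_integral_geometric)
  finally show ?thesis .
qed

lemma nn_integral_triangle_swap:
  fixes h :: "nat \<Rightarrow> nat \<Rightarrow> ennreal"
  shows "(\<integral>\<^sup>+p. \<integral>\<^sup>+k. h p k \<partial>count_space {p<..} \<partial>count_space {0<..})
       = (\<integral>\<^sup>+k. (\<Sum>p\<in>{0<..<k}. h p k) \<partial>count_space {0<..})"
proof -
  have "(\<integral>\<^sup>+p. \<integral>\<^sup>+k. h p k \<partial>count_space {p<..} \<partial>count_space {0<..})
      = (\<integral>\<^sup>+z. h (fst z) (snd z) \<partial>count_space (Sigma {0<..} (\<lambda>p. {p<..})))"
    by (simp add: nn_integral_count_space_Sigma)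
  also have "\<dots> = (\<integral>\<^sup>+z. h (fst (prod.swap z)) (snd (prod.swap z))
      \<partial>count_space (Sigma {0<..} (\<lambda>k. {0<..<k})))"
    by (rule nn_integral_count_space_reindex[where \<psi> = prod.swap]) auto
  also have "\<dots> = (\<integral>\<^sup>+k. (\<Sum>p\<in>{0<..<k}. h p k) \<partial>count_space {0<..})"
    by (simp add: nn_integral_count_space_Sigma[where f = "\<lambda>z. h (snd z) (fst z)"]
        nn_integral_count_space_finite)
  finally show ?thesis .
qed

lemma nn_integral_triangle_power_less_top:
  fixes r :: real
  assumes "0 \<le> r" "r < 1"
  shows "(\<integral>\<^sup>+p. \<integral>\<^sup>+k. ennreal (r ^ k) \<partial>count_space {p<..} \<partial>count_space (A::nat set)) < \<infinity>"
proof -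
  define \<rho> where "\<rho> = sqrt r"
  have \<rho>: "0 \<le> \<rho>" "\<rho> < 1"
    using assms by (simp_all add: \<rho>_def real_sqrt_lt_1_iff)
  have bound: "r ^ k \<le> \<rho> ^ p * \<rho> ^ k" if "p < k" for p k
  proof -
    have "r ^ k = \<rho> ^ (k + k)"
      using assms by (simp add: \<rho>_def power_add real_sqrt_pow2 flip: power_mult_distrib)
    also have "\<dots> \<le> \<rho> ^ (p + k)"
      using \<rho> that by (intro power_decreasing) simp_all
    finally show ?thesis
      by (simp add: power_add)
  qed
  have "(\<integral>\<^sup>+p. \<integral>\<^sup>+k. ennreal (r ^ k) \<partial>count_space {p<..} \<partial>count_space A)
      \<le> (\<integral>\<^sup>+p. \<integral>\<^sup>+k. ennreal (\<rho> ^ p) * ennreal (\<rho> ^ k) \<partial>count_space UNIV \<partial>count_space A)"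
  proof (intro nn_integral_mono)
    fix p
    have "(\<integral>\<^sup>+k. ennreal (r ^ k) \<partial>count_space {p<..}) \<le> (\<integral>\<^sup>+k. ennreal (\<rho> ^ p) * ennreal (\<rho> ^ k) \<partial>count_space {p<..})"
      using bound \<rho> by (intro nn_integral_mono) (simp add: ennreal_leI flip: ennreal_mult)
    also have "\<dots> \<le> (\<integral>\<^sup>+k. ennreal (\<rho> ^ p) * ennreal (\<rho> ^ k) \<partial>count_space UNIV)"
      by (rule nn_integral_count_space_mono_set) simp
    finally show "(\<integral>\<^sup>+k. ennreal (r ^ k) \<partial>count_space {p<..}) \<le> \<dots>" .
  qed
  also have "\<dots> = (\<integral>\<^sup>+p. ennreal (\<rho> ^ p) \<partial>count_space A) * (\<integral>\<^sup>+k. ennreal (\<rho> ^ k) \<partial>count_space UNIV)"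
    by (simp add: nn_integral_cmult nn_integral_multc)
  also have "\<dots> < \<infinity>"
    using nn_integral_power_less_top[OF \<rho>] by (simp add: ennreal_mult_less_top)
  finally show ?thesis .
qed

lemma nn_integral_power_sum_list:
  fixes r :: real
  assumes "0 \<le> r" "r < 1"
  shows "(\<integral>\<^sup>+ks. ennreal (r ^ sum_list ks) \<partial>count_space {ks::nat list. length ks = N})
       = ennreal (1 / (1 - r)) ^ N"
proof (induction N)
  case 0
  have "{ks::nat list. length ks = 0} = {[]}"
    by auto
  then show ?case
    by (simp add: nn_integral_count_space_finite)
next
  case (Suc N)
  have "(\<integral>\<^sup>+ks. ennreal (r ^ sum_list ks) \<partial>count_space {ks::nat list. length ks = Suc N})
      = (\<integral>\<^sup>+z. ennreal (r ^ sum_list (fst z # snd z))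
          \<partial>count_space (UNIV \<times> {ks::nat list. length ks = N}))"
    by (rule nn_integral_count_space_reindex[where \<psi> = "\<lambda>ks. (hd ks, tl ks)"])
      (auto simp: length_Suc_conv)
  also have "\<dots> = (\<integral>\<^sup>+k. ennreal (r ^ k) * ennreal (1 / (1 - r)) ^ N \<partial>count_space UNIV)"
    using assms by (simp add: nn_integral_count_space_Sigma power_add ennreal_mult nn_integral_cmult Suc)
  also have "\<dots> = ennreal (1 / (1 - r)) ^ Suc N"
    using assms by (simp add: nn_integral_multc nn_integral_geometric)
  finally show ?case .
qed

lemma ennreal_add_right_cancel:
  fixes a b c :: ennreal
  assumes "a + c = b + c" and "c \<noteq> \<infinity>"
  shows "a = b"
  using assms ennreal_add_left_cancel[of c a b] by (simp add: add.commute)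

section \<open>Strictly decreasing index lists\<close>

lemma sorted_wrt_greater_hd_last:
  fixes ks :: "'a::linorder list"
  assumes "sorted_wrt (>) ks" "x \<in> set ks"
  shows "last ks \<le> x" and "x \<le> hd ks"
proof -
  show "last ks \<le> x"
    using assms by (cases ks rule: rev_cases) (auto simp: sorted_wrt_append less_imp_le)
  show "x \<le> hd ks"
    using assms by (cases ks) (auto simp: less_imp_le)
qed

definition decreasing_lists :: "nat \<Rightarrow> nat \<Rightarrow> nat list set" where
  "decreasing_lists b N = {ks. length ks = N \<and> sorted_wrt (>) ks \<and> (\<forall>k\<in>set ks. b \<le> k)}"

lemma Cons_in_decreasing_lists_iff:
  assumes "ks \<noteq> []"
  shows "k # ks \<in> decreasing_lists b (Suc m) \<longleftrightarrow> ks \<in> decreasing_lists b m \<and> hd ks < k"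
  using assms
  by (auto simp: decreasing_lists_def dest: sorted_wrt_greater_hd_last(2))
    (meson hd_in_set le_less_trans less_imp_le)

lemma Cons_snoc_in_decreasing_lists_iff:
  assumes "mid \<noteq> []"
  shows "k # mid @ [p] \<in> decreasing_lists b (Suc (Suc m))
     \<longleftrightarrow> mid \<in> decreasing_lists 1 m \<and> hd mid < k \<and> b \<le> p \<and> p < last mid"
proof -
  have "sorted_wrt (>) mid \<Longrightarrow> last mid \<le> hd mid"
    using assms by (simp add: sorted_wrt_greater_hd_last(2))
  then show ?thesis
    using assms by (auto simp: decreasing_lists_def sorted_wrt_append Suc_le_eq
        dest: sorted_wrt_greater_hd_last intro: le_less_trans less_le_trans)
qed

lemma snoc_pair_in_decreasing_lists_iff:
  assumes "mid \<noteq> []"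
  shows "mid @ [a, p] \<in> decreasing_lists 0 (Suc (Suc m))
     \<longleftrightarrow> mid \<in> decreasing_lists 1 m \<and> a < last mid \<and> p < a"
  using assms last_in_set[OF assms]
  by (auto simp: decreasing_lists_def sorted_wrt_append Suc_le_eq
      dest: sorted_wrt_greater_hd_last intro: less_le_trans)

lemma nn_integral_decreasing_lists_Cons:
  assumes "0 < m"
  shows "(\<integral>\<^sup>+ks. H ks \<partial>count_space (decreasing_lists b (Suc m)))
       = (\<integral>\<^sup>+mid. \<integral>\<^sup>+k. H (k # mid) \<partial>count_space {hd mid<..} \<partial>count_space (decreasing_lists b m))"
proof -
  let ?\<Sigma> = "Sigma (decreasing_lists b m) (\<lambda>mid. {hd mid<..})"
  have "(\<integral>\<^sup>+ks. H ks \<partial>count_space (decreasing_lists b (Suc m)))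
      = (\<integral>\<^sup>+z. H (snd z # fst z) \<partial>count_space ?\<Sigma>)"
  proof (rule nn_integral_count_space_reindex[where \<psi> = "\<lambda>ks. (tl ks, hd ks)"])
    fix ks assume ks: "ks \<in> decreasing_lists b (Suc m)"
    then obtain k mid where "ks = k # mid" "mid \<noteq> []"
      using assms by (cases ks) (auto simp: decreasing_lists_def)
    then show "snd (tl ks, hd ks) # fst (tl ks, hd ks) = ks" "(tl ks, hd ks) \<in> ?\<Sigma>"
      using ks by (simp_all add: Cons_in_decreasing_lists_iff)
  next
    fix z assume z: "z \<in> ?\<Sigma>"
    then have "fst z \<noteq> []"
      using assms by (auto simp: decreasing_lists_def)
    then show "(tl (snd z # fst z), hd (snd z # fst z)) = z" "snd z # fst z \<in> decreasing_lists b (Suc m)"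
      using z by (auto simp: Cons_in_decreasing_lists_iff)
  qed
  then show ?thesis
    by (simp add: nn_integral_count_space_Sigma)
qed

(* The middle part is positive whatever b is: its entries exceed p \<ge> b. *)
lemma nn_integral_decreasing_lists_Cons_snoc:
  assumes "0 < m"
  shows "(\<integral>\<^sup>+ks. H ks \<partial>count_space (decreasing_lists b (Suc (Suc m))))
       = (\<integral>\<^sup>+mid. \<integral>\<^sup>+k. \<integral>\<^sup>+p. H (k # mid @ [p])
            \<partial>count_space {b..<last mid} \<partial>count_space {hd mid<..} \<partial>count_space (decreasing_lists 1 m))"
proof -
  let ?\<Sigma> = "Sigma (decreasing_lists 1 m) (\<lambda>mid. {hd mid<..} \<times> {b..<last mid})"
  let ?\<phi> = "\<lambda>(mid, k, p). k # mid @ [p]"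
  have "(\<integral>\<^sup>+ks. H ks \<partial>count_space (decreasing_lists b (Suc (Suc m))))
      = (\<integral>\<^sup>+z. H (?\<phi> z) \<partial>count_space ?\<Sigma>)"
  proof (rule nn_integral_count_space_reindex[where \<psi> = "\<lambda>ks. (butlast (tl ks), hd ks, last ks)"])
    fix ks assume ks: "ks \<in> decreasing_lists b (Suc (Suc m))"
    then obtain k mid p where "ks = k # mid @ [p]" "mid \<noteq> []"
      using assms by (cases ks; cases "tl ks" rule: rev_cases) (auto simp: decreasing_lists_def)
    then show "?\<phi> (butlast (tl ks), hd ks, last ks) = ks" "(butlast (tl ks), hd ks, last ks) \<in> ?\<Sigma>"
      using ks by (simp_all add: Cons_snoc_in_decreasing_lists_iff)
  next
    fix z assume z: "z \<in> ?\<Sigma>"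
    then obtain mid k p where "z = (mid, k, p)" "mid \<noteq> []"
      using assms by (auto simp: decreasing_lists_def)
    then show "(butlast (tl (?\<phi> z)), hd (?\<phi> z), last (?\<phi> z)) = z"
      "?\<phi> z \<in> decreasing_lists b (Suc (Suc m))"
      using z by (auto simp: Cons_snoc_in_decreasing_lists_iff)
  qed
  then show ?thesis
    by (simp add: nn_integral_count_space_Sigma case_prod_beta)
qed

lemma nn_integral_decreasing_lists_snoc_pair:
  assumes "0 < m"
  shows "(\<integral>\<^sup>+ks. H ks \<partial>count_space (decreasing_lists 0 (Suc (Suc m))))
       = (\<integral>\<^sup>+mid. \<integral>\<^sup>+a. \<integral>\<^sup>+p. H (mid @ [a, p])
            \<partial>count_space {..<a} \<partial>count_space {..<last mid} \<partial>count_space (decreasing_lists 1 m))"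
proof -
  let ?\<Sigma> = "Sigma (decreasing_lists 1 m) (\<lambda>mid. Sigma {..<last mid} (\<lambda>a. {..<a}))"
  let ?\<phi> = "\<lambda>(mid, a, p). mid @ [a, p]"
  let ?\<psi> = "\<lambda>ks. (butlast (butlast ks), last (butlast ks), last ks)"
  have "(\<integral>\<^sup>+ks. H ks \<partial>count_space (decreasing_lists 0 (Suc (Suc m))))
      = (\<integral>\<^sup>+z. H (?\<phi> z) \<partial>count_space ?\<Sigma>)"
  proof (rule nn_integral_count_space_reindex[where \<psi> = ?\<psi>])
    fix ks assume ks: "ks \<in> decreasing_lists 0 (Suc (Suc m))"
    then obtain mid a p where "ks = mid @ [a, p]" "mid \<noteq> []"
      using assms by (cases ks rule: rev_cases; cases "butlast ks" rule: rev_cases)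
        (auto simp: decreasing_lists_def)
    then show "?\<phi> (?\<psi> ks) = ks" "?\<psi> ks \<in> ?\<Sigma>"
      using ks by (simp_all add: snoc_pair_in_decreasing_lists_iff butlast_append)
  next
    fix z assume z: "z \<in> ?\<Sigma>"
    then obtain mid a p where "z = (mid, a, p)" "mid \<noteq> []"
      using assms by (auto simp: decreasing_lists_def)
    then show "?\<psi> (?\<phi> z) = z" "?\<phi> z \<in> decreasing_lists 0 (Suc (Suc m))"
      using z by (auto simp: snoc_pair_in_decreasing_lists_iff butlast_append)
  qed
  then show ?thesis
    by (simp add: nn_integral_count_space_Sigma case_prod_beta)
qed

lemma nn_integral_decreasing_lists_singleton:
  "(\<integral>\<^sup>+ks. H ks \<partial>count_space (decreasing_lists b 1)) = (\<integral>\<^sup>+k. H [k] \<partial>count_space {b..})"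
  by (rule nn_integral_count_space_reindex[where \<psi> = hd]) (auto simp: decreasing_lists_def length_Suc_conv)

lemma nn_integral_decreasing_lists_pair:
  "(\<integral>\<^sup>+ks. H ks \<partial>count_space (decreasing_lists b 2))
     = (\<integral>\<^sup>+p. \<integral>\<^sup>+k. H [k, p] \<partial>count_space {p<..} \<partial>count_space {b..})"
proof -
  have "(\<integral>\<^sup>+ks. H ks \<partial>count_space (decreasing_lists b 2))
      = (\<integral>\<^sup>+z. H [snd z, fst z] \<partial>count_space (Sigma {b..} (\<lambda>p. {p<..})))"
    by (rule nn_integral_count_space_reindex[where \<psi> = "\<lambda>ks. (ks ! 1, ks ! 0)"])
      (auto simp: decreasing_lists_def length_Suc_conv numeral_2_eq_2)
  then show ?thesis
    by (simp add: nn_integral_count_space_Sigma)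
qed

lemma nn_integral_decreasing_lists_power_hd_less_top:
  fixes r :: real
  assumes "0 < r" "r < 1" "0 < N"
  shows "(\<integral>\<^sup>+ks. ennreal (r ^ hd ks) \<partial>count_space (decreasing_lists b N)) < \<infinity>"
proof -
  define \<rho> where "\<rho> = root N r"
  have \<rho>: "0 < \<rho>" "\<rho> < 1" "\<rho> ^ N = r"
    using assms by (simp_all add: \<rho>_def real_root_lt_1_iff real_root_pow_pos2)
  have "r ^ hd ks \<le> \<rho> ^ sum_list ks" if "ks \<in> decreasing_lists b N" for ks
  proof -
    have "\<forall>k\<in>set ks. k \<le> hd ks"
      using that by (cases ks) (auto simp: decreasing_lists_def less_imp_le)
    then have "sum_list ks \<le> N * hd ks"
      using that sum_list_mono[of ks id "\<lambda>_. hd ks"] by (simp add: decreasing_lists_def sum_list_triv)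
    then have "\<rho> ^ (N * hd ks) \<le> \<rho> ^ sum_list ks"
      using \<rho> by (intro power_decreasing) simp_all
    then show ?thesis
      by (simp add: power_mult \<rho>)
  qed
  then have "(\<integral>\<^sup>+ks. ennreal (r ^ hd ks) \<partial>count_space (decreasing_lists b N))
      \<le> (\<integral>\<^sup>+ks. ennreal (\<rho> ^ sum_list ks) \<partial>count_space (decreasing_lists b N))"
    by (intro nn_integral_mono ennreal_leI) simp
  also have "\<dots> \<le> (\<integral>\<^sup>+ks. ennreal (\<rho> ^ sum_list ks) \<partial>count_space {ks. length ks = N})"
    by (rule nn_integral_count_space_mono_set) (auto simp: decreasing_lists_def)
  also have "\<dots> = ennreal (1 / (1 - \<rho>)) ^ N"
    using \<rho> by (intro nn_integral_power_sum_list) simp_all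
  also have "\<dots> < \<infinity>"
    by (simp add: power_less_top_ennreal)
  finally show ?thesis .
qed

section \<open>The summands and the partial-fraction identity\<close>

definition qzeta_factor :: "real \<Rightarrow> nat \<Rightarrow> nat \<Rightarrow> real" where
  "qzeta_factor q s k = q ^ ((s - 1) * k) / qint q k ^ s"

definition qT_weight :: "real \<Rightarrow> nat \<Rightarrow> real" where
  "qT_weight q a = q ^ a / qint q a"

definition qzeta_term :: "real \<Rightarrow> nat list \<Rightarrow> nat list \<Rightarrow> real" where
  "qzeta_term q t ks = (\<Prod>j<length t. qzeta_factor q (t ! j) (ks ! j))"

abbreviation tail_sum :: "(nat \<Rightarrow> real) \<Rightarrow> nat \<Rightarrow> ennreal" where
  "tail_sum f L \<equiv> \<integral>\<^sup>+k. ennreal (f k) \<partial>count_space {L<..}"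

definition qzeta_nn :: "real \<Rightarrow> nat list \<Rightarrow> ennreal" where
  "qzeta_nn q t = (\<integral>\<^sup>+ks. ennreal (qzeta_term q t ks) \<partial>count_space (decreasing_lists 1 (length t)))"

definition qT_nn :: "real \<Rightarrow> nat list \<Rightarrow> ennreal" where
  "qT_nn q s = (\<integral>\<^sup>+ks. ennreal (qT_weight q (hd ks - last ks) * qzeta_term q s ks)
      \<partial>count_space (decreasing_lists 0 (Suc (length s))))"

lemma qzeta_term_Nil [simp]: "qzeta_term q [] ks = 1"
  by (simp add: qzeta_term_def)

lemma qzeta_term_Cons [simp]: "qzeta_term q (s # t) (k # ks) = qzeta_factor q s k * qzeta_term q t ks"
  unfolding qzeta_term_def by (simp only: length_Cons prod.lessThan_Suc_shift) simp

lemma qzeta_term_append: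
  "length ks = length t \<Longrightarrow> qzeta_term q (t @ t') (ks @ ks') = qzeta_term q t ks * qzeta_term q t' ks'"
  by (induction t arbitrary: ks) (auto simp: length_Suc_conv)

lemma qzeta_term_append_ignored:
  "length ks = length t \<Longrightarrow> qzeta_term q t (ks @ ks') = qzeta_term q t ks"
  using qzeta_term_append[of ks t q "[]" ks'] by simp

lemma qzeta_factor_Suc: "qzeta_factor q (Suc s) k = qT_weight q k ^ s / qint q k"
  by (simp add: qzeta_factor_def qT_weight_def power_divide mult.commute[of _ k] power_mult)

lemma qzeta_factor_mult_qT_weight:
  "0 < s \<Longrightarrow> qzeta_factor q s k * qT_weight q k = qzeta_factor q (Suc s) k"
  by (cases s) (simp_all add: qzeta_factor_Suc)

lemma qint_add: "qint q (m + n) = qint q m + q ^ m * qint q n"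
proof (cases "q = 1")
  case False
  then have "1 - q \<noteq> 0"
    by simp
  then show ?thesis
    by (simp add: qint_def power_add diff_divide_distrib add_divide_distrib right_diff_distrib)
qed (simp add: qint_def)

(* With x = 1/[k], y = 1/[l], a = g(k), b = g(l) and G = g(k-l) this becomes
   qzeta_factor_identity, since f_(j+1)(k) = x a^j. *)
lemma telescoping_identity:
  fixes x y a b G :: "'a::comm_ring_1"
  assumes "b - a = y - x" and "G * (y - x) = y * a"
  shows "x * a ^ n * G + (\<Sum>j<n. x * a ^ (n - j) * (y * b ^ j)) + y * b ^ n * a = y * b ^ n * G"
proof (induction n)
  case 0
  then show ?case using assms(2) by (simp add: algebra_simps)
next
  case (Suc n)
  let ?S = "\<lambda>n. \<Sum>j<n. x * a ^ (n - j) * (y * b ^ j)"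
  have "?S (Suc n) = a * ?S n + x * a * (y * b ^ n)"
    by (simp add: sum_distrib_left Suc_diff_le algebra_simps)
  then have "x * a ^ Suc n * G + ?S (Suc n) + y * b ^ Suc n * a
      = a * (x * a ^ n * G + ?S n) + x * a * (y * b ^ n) + y * b ^ Suc n * a"
    by (simp add: algebra_simps)
  also have "x * a ^ n * G + ?S n = y * b ^ n * G - y * b ^ n * a"
    using Suc.IH by (simp add: eq_diff_eq)
  also have "a * (y * b ^ n * G - y * b ^ n * a) + x * a * (y * b ^ n) + y * b ^ Suc n * a
      = y * b ^ n * (a * G - a * a + x * a + b * a)"
    by (simp add: algebra_simps)
  also have "a * G - a * a + x * a + b * a = b * G"
  proof -
    have b: "b = a + (y - x)"
      using assms(1) by (simp add: algebra_simps)
    show ?thesis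
      unfolding b using assms(2) by (simp add: algebra_simps)
  qed
  finally show ?case
    by (simp add: algebra_simps)
qed

context
  fixes q :: real
  assumes q_pos: "0 < q" and q_less_1: "q < 1"
begin

lemma qint_nonneg: "0 \<le> qint q k"
  using q_pos q_less_1 by (simp add: qint_def power_le_one)

lemma qint_ge_1:
  assumes "0 < k"
  shows "1 \<le> qint q k"
proof -
  have "qint q k = qint q 1 + q * qint q (k - 1)"
    using assms qint_add[of q 1 "k - 1"] by simp
  moreover have "qint q 1 = 1"
    using q_less_1 by (simp add: qint_def)
  ultimately show ?thesis
    using q_pos qint_nonneg[of "k - 1"] by simp
qed

lemma qint_pos: "0 < k \<Longrightarrow> 0 < qint q k"
  using qint_ge_1[of k] by linarith

lemma qzeta_factor_nonneg [simp]: "0 \<le> qzeta_factor q s k"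
  using q_pos qint_nonneg by (simp add: qzeta_factor_def)

lemma qT_weight_nonneg [simp]: "0 \<le> qT_weight q k"
  using q_pos qint_nonneg by (simp add: qT_weight_def)

lemma qzeta_term_nonneg [simp]: "0 \<le> qzeta_term q t ks"
  by (simp add: qzeta_term_def prod_nonneg)

lemma qT_weight_le_power: "qT_weight q k \<le> q ^ k"
  using q_pos qint_ge_1[of k] by (cases "k = 0") (simp_all add: qT_weight_def qint_def[of q 0] divide_le_eq)

lemma qzeta_factor_le_power: "0 < k \<Longrightarrow> qzeta_factor q s k \<le> q ^ ((s - 1) * k)"
  using q_pos qint_ge_1[of k] by (simp add: qzeta_factor_def divide_le_eq one_le_power)

lemma qT_weight_le_1: "qT_weight q k \<le> 1"
  using qT_weight_le_power[of k] power_le_one[of q k] q_pos q_less_1 by simp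

lemma qzeta_factor_le_1: "0 < k \<Longrightarrow> qzeta_factor q s k \<le> 1"
  using qzeta_factor_le_power[of k s] power_le_one[of q] q_pos q_less_1 by (meson less_imp_le order.trans)

lemma qzeta_factor_le_power_self:
  assumes "2 \<le> s" "0 < k"
  shows "qzeta_factor q s k \<le> q ^ k"
proof -
  have "q ^ ((s - 1) * k) \<le> q ^ k"
    using assms q_pos q_less_1 by (intro power_decreasing) (simp_all add: Suc_le_eq)
  then show ?thesis
    using qzeta_factor_le_power[OF assms(2), of s] by simp
qed

lemma qT_weight_diff:
  assumes "l < k" "0 < l"
  shows "qT_weight q (k - l) * (1 / qint q l - 1 / qint q k) = qT_weight q k / qint q l"
proof -
  obtain d where k: "k = l + d" and "0 < d"
    using assms(1) less_imp_add_positive by blast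
  then have "0 < qint q l" "0 < qint q d" "0 < qint q (l + d)"
    using assms(2) qint_pos by simp_all
  then show ?thesis
    unfolding k qT_weight_def qint_add[of q l d] by (simp add: power_add field_simps)
qed

lemma qT_weight_conv_qint:
  assumes "0 < k"
  shows "qT_weight q k = 1 / qint q k - (1 - q)"
proof -
  have "q ^ k < 1"
    using assms q_pos q_less_1 by (simp add: power_less_one_iff)
  then show ?thesis
    using q_less_1 by (simp add: qT_weight_def qint_def field_simps)
qed

lemma qzeta_factor_identity:
  assumes "l < k" "0 < l" "0 < s"
  shows "qzeta_factor q s k * qT_weight q (k - l)
       + (\<Sum>j<s - 1. qzeta_factor q (s - j) k * qzeta_factor q (j + 1) l)
       + qzeta_factor q s l * qT_weight q k
       = qzeta_factor q s l * qT_weight q (k - l)"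
proof -
  obtain n where s: "s = Suc n"
    using assms(3) by (cases s) auto
  define x y where "x = 1 / qint q k" and "y = 1 / qint q l"
  have fk: "qzeta_factor q (Suc m) k = x * qT_weight q k ^ m"
    and fl: "qzeta_factor q (Suc m) l = y * qT_weight q l ^ m" for m
    by (simp_all add: qzeta_factor_Suc x_def y_def)
  have "qT_weight q l - qT_weight q k = y - x"
    using assms by (simp add: qT_weight_conv_qint x_def y_def)
  moreover have "qT_weight q (k - l) * (y - x) = y * qT_weight q k"
    using qT_weight_diff[OF assms(1,2)] by (simp add: x_def y_def)
  ultimately have "x * qT_weight q k ^ n * qT_weight q (k - l)
      + (\<Sum>j<n. x * qT_weight q k ^ (n - j) * (y * qT_weight q l ^ j))
      + y * qT_weight q l ^ n * qT_weight q k = y * qT_weight q l ^ n * qT_weight q (k - l)"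
    by (rule telescoping_identity)
  moreover have "(\<Sum>j<s - 1. qzeta_factor q (s - j) k * qzeta_factor q (j + 1) l)
      = (\<Sum>j<n. x * qT_weight q k ^ (n - j) * (y * qT_weight q l ^ j))"
    by (simp add: s fk fl Suc_diff_le)
  ultimately show ?thesis
    by (simp add: s fk fl)
qed

section \<open>Summing over the first index\<close>

lemma tail_sum_qT_weight_less_top: "tail_sum (qT_weight q) L < \<infinity>"
proof -
  have "tail_sum (qT_weight q) L \<le> tail_sum (\<lambda>k. q ^ k) L"
    using q_pos q_less_1 by (intro nn_integral_mono ennreal_leI) (simp add: qT_weight_le_power)
  also have "\<dots> < \<infinity>"
    using q_pos q_less_1 by (intro nn_integral_power_less_top) simp_all
  finally show ?thesis .
qed

lemma tail_sum_identity:
  assumes "0 < l" "l \<le> L" "0 < s"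
  shows "tail_sum (\<lambda>k. qzeta_factor q s k * qT_weight q (k - l)) L
       + (\<Sum>j<s - 1. tail_sum (qzeta_factor q (s - j)) L * ennreal (qzeta_factor q (j + 1) l))
       = (\<Sum>p<l. ennreal (qzeta_factor q s l * qT_weight q (L - p)))"
proof -
  define c where "c = ennreal (qzeta_factor q s l)"
  have finite: "c * tail_sum (qT_weight q) L \<noteq> \<infinity>"
    using tail_sum_qT_weight_less_top[of L] by (simp add: c_def ennreal_mult_eq_top_iff less_top)
  have "tail_sum (\<lambda>k. qzeta_factor q s k * qT_weight q (k - l)) L
      + (\<Sum>j<s - 1. tail_sum (qzeta_factor q (s - j)) L * ennreal (qzeta_factor q (j + 1) l))
      + c * tail_sum (qT_weight q) L
      = \<integral>\<^sup>+k. ennreal (qzeta_factor q s k * qT_weight q (k - l)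
          + (\<Sum>j<s - 1. qzeta_factor q (s - j) k * qzeta_factor q (j + 1) l)
          + qzeta_factor q s l * qT_weight q k) \<partial>count_space {L<..}"
    by (simp add: c_def nn_integral_add nn_integral_sum nn_integral_multc nn_integral_cmult
        ennreal_plus ennreal_mult sum_nonneg flip: sum_ennreal)
  also have "\<dots> = \<integral>\<^sup>+k. c * ennreal (qT_weight q (k - l)) \<partial>count_space {L<..}"
    using qzeta_factor_identity[OF _ assms(1,3)] assms(2) 
    by (intro nn_integral_cong) (simp add: c_def ennreal_mult)
  also have "\<dots> = c * ((\<Sum>p<l. ennreal (qT_weight q (L - p))) + tail_sum (qT_weight q) L)"
    using nn_integral_count_space_shift[OF assms(2), of "\<lambda>k. ennreal (qT_weight q k)"]
    by (simp add: nn_integral_cmult)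
  also have "\<dots> = (\<Sum>p<l. ennreal (qzeta_factor q s l * qT_weight q (L - p))) + c * tail_sum (qT_weight q) L"
    by (simp add: c_def distrib_left sum_distrib_left ennreal_mult del: sum_ennreal)
  finally show ?thesis
    using finite by (rule ennreal_add_right_cancel)
qed

lemma tail_sum_identity_summed:
  assumes "0 < l" "l \<le> L" "0 < s"
  shows "tail_sum (\<lambda>k. \<Sum>p<l. qzeta_factor q s k * qT_weight q (k - p)) L
       + (\<Sum>j<s - 1. tail_sum (qzeta_factor q (s - j)) L * ennreal (\<Sum>p\<in>{0<..<l}. qzeta_factor q (j + 1) p))
       = tail_sum (qzeta_factor q (Suc s)) L
       + ennreal (\<Sum>m<l. \<Sum>p<m. qzeta_factor q s m * qT_weight q (L - p))"
  using assms(1,2)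
proof (induction l rule: nat_induct_non_zero)
  case 1
  have "{0<..<1::nat} = {}"
    by auto
  then show ?case
    using assms(3) by (simp add: qzeta_factor_mult_qT_weight)
next
  case (Suc n)
  have "tail_sum (\<lambda>k. \<Sum>p<Suc n. qzeta_factor q s k * qT_weight q (k - p)) L
      = tail_sum (\<lambda>k. \<Sum>p<n. qzeta_factor q s k * qT_weight q (k - p)) L
      + tail_sum (\<lambda>k. qzeta_factor q s k * qT_weight q (k - n)) L"
    by (simp add: nn_integral_add sum_nonneg del: sum_ennreal)
  moreover have "ennreal (\<Sum>p\<in>{0<..<Suc n}. qzeta_factor q (j + 1) p)
      = ennreal (\<Sum>p\<in>{0<..<n}. qzeta_factor q (j + 1) p) + ennreal (qzeta_factor q (j + 1) n)" for j
  proof -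
    have "{0<..<Suc n} = insert n {0<..<n}"
      using Suc.hyps by auto
    then show ?thesis
      by (simp add: sum_nonneg del: sum_ennreal)
  qed
  moreover have "ennreal (\<Sum>m<Suc n. \<Sum>p<m. qzeta_factor q s m * qT_weight q (L - p))
      = ennreal (\<Sum>m<n. \<Sum>p<m. qzeta_factor q s m * qT_weight q (L - p))
      + (\<Sum>p<n. ennreal (qzeta_factor q s n * qT_weight q (L - p)))"
    by (simp add: sum_nonneg del: sum_ennreal) (simp add: mult_nonneg_nonneg)
  ultimately show ?case
    using Suc.IH Suc.prems tail_sum_identity[OF Suc.hyps _ assms(3), of L]
    by (simp add: distrib_left sum.distrib ac_simps del: sum_ennreal)
qed

lemma tail_sum_triangle_less_top:
  assumes "2 \<le> s"
  shows "(\<integral>\<^sup>+p. tail_sum (\<lambda>k. qzeta_factor q s k * qT_weight q (k - p)) p \<partial>count_space {0<..}) < \<infinity>"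
proof -
  have "qzeta_factor q s k * qT_weight q (k - p) \<le> q ^ k * 1" if "p < k" for p k
    using that assms q_pos by (intro mult_mono qzeta_factor_le_power_self qT_weight_le_1) simp_all
  then have "(\<integral>\<^sup>+p. tail_sum (\<lambda>k. qzeta_factor q s k * qT_weight q (k - p)) p \<partial>count_space {0<..})
      \<le> (\<integral>\<^sup>+p. \<integral>\<^sup>+k. ennreal (q ^ k) \<partial>count_space {p<..} \<partial>count_space {0<..})"
    by (intro nn_integral_mono ennreal_leI) simp
  also have "\<dots> < \<infinity>"
    using q_pos q_less_1 by (intro nn_integral_triangle_power_less_top) simp_all
  finally show ?thesis .
qed

lemma tail_sum_depth_two_formula:
  assumes "2 \<le> s"
  shows "tail_sum (qzeta_factor q (Suc s)) 0
       = (\<Sum>j<s - 1. \<integral>\<^sup>+p. tail_sum (\<lambda>k. qzeta_factor q (s - j) k * qzeta_factor q (j + 1) p) p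
            \<partial>count_space {0<..})"
proof -
  \<comment> \<open>?X occurs on both sides; cancelling it is where \<open>2 \<le> s\<close> is needed.\<close>
  let ?X = "\<integral>\<^sup>+p. tail_sum (\<lambda>k. qzeta_factor q s k * qT_weight q (k - p)) p \<partial>count_space {0<..}"
  have fiber: "tail_sum (\<lambda>k. qzeta_factor q s k * qT_weight q (k - p)) p
      + (\<Sum>j<s - 1. tail_sum (\<lambda>k. qzeta_factor q (s - j) k * qzeta_factor q (j + 1) p) p)
      = ennreal (qzeta_factor q (Suc s) p) + (\<Sum>i\<in>{0<..<p}. ennreal (qzeta_factor q s p * qT_weight q (p - i)))"
    if "0 < p" for p
  proof -
    have "{..<p} = insert 0 {0<..<p}"
      using that by auto
    then have "(\<Sum>i<p. ennreal (qzeta_factor q s p * qT_weight q (p - i)))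
        = ennreal (qzeta_factor q (Suc s) p) + (\<Sum>i\<in>{0<..<p}. ennreal (qzeta_factor q s p * qT_weight q (p - i)))"
      using assms by (simp add: qzeta_factor_mult_qT_weight del: sum_ennreal)
    then show ?thesis
      using tail_sum_identity[OF that order.refl, of s] assms 
      by (simp add: ennreal_mult nn_integral_multc)
  qed
  have "?X + (\<Sum>j<s - 1. \<integral>\<^sup>+p. tail_sum (\<lambda>k. qzeta_factor q (s - j) k * qzeta_factor q (j + 1) p) p
        \<partial>count_space {0<..})
      = \<integral>\<^sup>+p. tail_sum (\<lambda>k. qzeta_factor q s k * qT_weight q (k - p)) p
        + (\<Sum>j<s - 1. tail_sum (\<lambda>k. qzeta_factor q (s - j) k * qzeta_factor q (j + 1) p) p) \<partial>count_space {0<..}"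
    by (simp add: nn_integral_add nn_integral_sum del: sum_ennreal)
  also have "\<dots> = \<integral>\<^sup>+p. ennreal (qzeta_factor q (Suc s) p)
        + (\<Sum>i\<in>{0<..<p}. ennreal (qzeta_factor q s p * qT_weight q (p - i))) \<partial>count_space {0<..}"
    using fiber by (intro nn_integral_cong) simp
  also have "\<dots> = tail_sum (qzeta_factor q (Suc s)) 0 + ?X"
    by (simp add: nn_integral_add nn_integral_triangle_swap del: sum_ennreal)
  finally show ?thesis
    using tail_sum_triangle_less_top[OF assms] by (auto simp: add.commute ennreal_add_left_cancel)
qed

section \<open>Splitting off the outer indices\<close>

lemma qzeta_eq_enn2real:
  assumes "qzeta_nn q t \<noteq> \<infinity>"
  shows "qzeta q t = enn2real (qzeta_nn q t)"
proof -
  have "qzeta q t = (\<Sum>\<^sub>\<infinity>ks\<in>decreasing_lists 1 (length t). qzeta_term q t ks)"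
    by (simp add: qzeta_def qzeta_term_def qzeta_factor_def decreasing_lists_def Suc_le_eq)
  also have "\<dots> = enn2real (qzeta_nn q t)"
    using assms unfolding qzeta_nn_def
    by (intro infsum_eq_enn2real_nn_integral qzeta_term_nonneg)
  finally show ?thesis .
qed

lemma qT_eq_enn2real:
  assumes "qT_nn q s \<noteq> \<infinity>"
  shows "qT q s = enn2real (qT_nn q s)"
proof -
  have "qT q s = (\<Sum>\<^sub>\<infinity>ks\<in>decreasing_lists 0 (Suc (length s)).
      qT_weight q (hd ks - last ks) * qzeta_term q s ks)"
    by (simp add: qT_def qT_weight_def qzeta_term_def qzeta_factor_def decreasing_lists_def)
  also have "\<dots> = enn2real (qT_nn q s)"
    using assms unfolding qT_nn_def
    by (intro infsum_eq_enn2real_nn_integral mult_nonneg_nonneg qT_weight_nonneg qzeta_term_nonneg)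
  finally show ?thesis .
qed

lemma qzeta_term_le_power:
  assumes "j < length t" "2 \<le> t ! j" and pos: "\<forall>i<length t. 0 < ks ! i"
  shows "qzeta_term q t ks \<le> q ^ (ks ! j)"
proof -
  have "(\<Prod>i\<in>{..<length t} - {j}. qzeta_factor q (t ! i) (ks ! i)) \<le> 1"
    using pos by (intro prod_le_1) (simp_all add: qzeta_factor_le_1)
  then have "qzeta_term q t ks \<le> qzeta_factor q (t ! j) (ks ! j)"
    unfolding qzeta_term_def using assms(1) by (simp add: prod.remove[of _ j] mult_left_le)
  also have "\<dots> \<le> q ^ (ks ! j)"
    using assms pos by (intro qzeta_factor_le_power_self) simp_all
  finally show ?thesis .
qed

lemma qzeta_nn_less_top:
  assumes "t \<noteq> []" "2 \<le> hd t"
  shows "qzeta_nn q t < \<infinity>"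
proof -
  have "qzeta_term q t ks \<le> q ^ hd ks" if "ks \<in> decreasing_lists 1 (length t)" for ks
  proof -
    have "\<forall>i<length t. 0 < ks ! i" "ks \<noteq> []"
      using that assms(1) by (auto simp: decreasing_lists_def Suc_le_eq)
    then show ?thesis
      using qzeta_term_le_power[of 0 t ks] assms by (simp add: hd_conv_nth)
  qed
  then have "qzeta_nn q t \<le> (\<integral>\<^sup>+ks. ennreal (q ^ hd ks) \<partial>count_space (decreasing_lists 1 (length t)))"
    unfolding qzeta_nn_def by (intro nn_integral_mono ennreal_leI) simp
  also have "\<dots> < \<infinity>"
    using assms q_pos q_less_1 by (intro nn_integral_decreasing_lists_power_hd_less_top) simp_all
  finally show ?thesis .
qed

lemma qT_nn_less_top:
  assumes "\<exists>x\<in>set s. 1 < x"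
  shows "qT_nn q s < \<infinity>"
proof -
  obtain j where j: "j < length s" "2 \<le> s ! j"
    using assms by (auto simp: in_set_conv_nth)
  have "qT_weight q (hd ks - last ks) * qzeta_term q s ks \<le> q ^ hd ks"
    if ks: "ks \<in> decreasing_lists 0 (Suc (length s))" for ks
  proof -
    have "ks \<noteq> []"
      using ks by (auto simp: decreasing_lists_def)
    then have last: "last ks = ks ! length s"
      using ks by (simp add: decreasing_lists_def last_conv_nth)
    have above_last: "last ks < ks ! i" if "i < length s" for i
      using ks that unfolding last by (auto simp: decreasing_lists_def intro: sorted_wrt_nth_less)
    then have "qzeta_term q s ks \<le> q ^ (ks ! j)"
      by (intro qzeta_term_le_power j) (auto intro: le_less_trans[OF le0])
    also have "\<dots> \<le> q ^ last ks"
      using above_last[OF j(1)] q_pos q_less_1 by (intro power_decreasing) simp_all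
    finally have "qT_weight q (hd ks - last ks) * qzeta_term q s ks \<le> q ^ (hd ks - last ks) * q ^ last ks"
      using qT_weight_le_power q_pos by (intro mult_mono) simp_all
    moreover have "last ks \<le> hd ks"
      using ks \<open>ks \<noteq> []\<close> by (cases ks) (auto simp: decreasing_lists_def less_imp_le)
    ultimately show ?thesis
      by (simp flip: power_add)
  qed
  then have "qT_nn q s \<le> (\<integral>\<^sup>+ks. ennreal (q ^ hd ks) \<partial>count_space (decreasing_lists 0 (Suc (length s))))"
    unfolding qT_nn_def by (intro nn_integral_mono ennreal_leI) simp
  also have "\<dots> < \<infinity>"
    using q_pos q_less_1 by (intro nn_integral_decreasing_lists_power_hd_less_top) simp_all
  finally show ?thesis .
qed

lemma qT_nn_Cons:
  assumes "ss \<noteq> []"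
  shows "qT_nn q (s # ss) = (\<integral>\<^sup>+mid. ennreal (qzeta_term q ss mid)
      * tail_sum (\<lambda>k. \<Sum>p<last mid. qzeta_factor q s k * qT_weight q (k - p)) (hd mid)
      \<partial>count_space (decreasing_lists 1 (length ss)))"
proof -
  have "qT_nn q (s # ss) = (\<integral>\<^sup>+mid. \<integral>\<^sup>+k. \<integral>\<^sup>+p.
      ennreal (qT_weight q (k - p) * qzeta_term q (s # ss) (k # mid @ [p]))
      \<partial>count_space {0..<last mid} \<partial>count_space {hd mid<..} \<partial>count_space (decreasing_lists 1 (length ss)))"
    using assms unfolding qT_nn_def by (simp add: nn_integral_decreasing_lists_Cons_snoc)
  also have "\<dots> = (\<integral>\<^sup>+mid. ennreal (qzeta_term q ss mid)
      * tail_sum (\<lambda>k. \<Sum>p<last mid. qzeta_factor q s k * qT_weight q (k - p)) (hd mid)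
      \<partial>count_space (decreasing_lists 1 (length ss)))"
  proof (intro nn_integral_cong)
    fix mid assume "mid \<in> space (count_space (decreasing_lists 1 (length ss)))"
    then have "length mid = length ss"
      by (simp add: decreasing_lists_def)
    then have "ennreal (qT_weight q (k - p) * qzeta_term q (s # ss) (k # mid @ [p]))
        = ennreal (qzeta_term q ss mid) * ennreal (qzeta_factor q s k * qT_weight q (k - p))" for k p
      by (simp add: qzeta_term_append_ignored mult_ac flip: ennreal_mult)
    then show "(\<integral>\<^sup>+k. \<integral>\<^sup>+p. ennreal (qT_weight q (k - p) * qzeta_term q (s # ss) (k # mid @ [p]))
        \<partial>count_space {0..<last mid} \<partial>count_space {hd mid<..})
      = ennreal (qzeta_term q ss mid)
        * tail_sum (\<lambda>k. \<Sum>p<last mid. qzeta_factor q s k * qT_weight q (k - p)) (hd mid)"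
      by (simp add: nn_integral_count_space_finite atLeast0LessThan nn_integral_cmult
          flip: sum_distrib_left)
  qed
  finally show ?thesis .
qed

lemma qT_nn_snoc:
  assumes "ss \<noteq> []"
  shows "qT_nn q (ss @ [s]) = (\<integral>\<^sup>+mid. ennreal (qzeta_term q ss mid)
      * ennreal (\<Sum>a<last mid. \<Sum>p<a. qzeta_factor q s a * qT_weight q (hd mid - p))
      \<partial>count_space (decreasing_lists 1 (length ss)))"
proof -
  have "qT_nn q (ss @ [s]) = (\<integral>\<^sup>+mid. \<integral>\<^sup>+a. \<integral>\<^sup>+p.
      ennreal (qT_weight q (hd (mid @ [a, p]) - p) * qzeta_term q (ss @ [s]) (mid @ [a, p]))
      \<partial>count_space {..<a} \<partial>count_space {..<last mid} \<partial>count_space (decreasing_lists 1 (length ss)))"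
    using assms unfolding qT_nn_def by (simp add: nn_integral_decreasing_lists_snoc_pair)
  also have "\<dots> = (\<integral>\<^sup>+mid. ennreal (qzeta_term q ss mid)
      * ennreal (\<Sum>a<last mid. \<Sum>p<a. qzeta_factor q s a * qT_weight q (hd mid - p))
      \<partial>count_space (decreasing_lists 1 (length ss)))"
  proof (intro nn_integral_cong)
    fix mid assume "mid \<in> space (count_space (decreasing_lists 1 (length ss)))"
    then have "length mid = length ss" "mid \<noteq> []"
      using assms by (auto simp: decreasing_lists_def)
    then have "ennreal (qT_weight q (hd (mid @ [a, p]) - p) * qzeta_term q (ss @ [s]) (mid @ [a, p]))
        = ennreal (qzeta_term q ss mid) * ennreal (qzeta_factor q s a * qT_weight q (hd mid - p))" for a p
      by (simp add: qzeta_term_append mult_ac flip: ennreal_mult)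
    then show "(\<integral>\<^sup>+a. \<integral>\<^sup>+p.
        ennreal (qT_weight q (hd (mid @ [a, p]) - p) * qzeta_term q (ss @ [s]) (mid @ [a, p]))
        \<partial>count_space {..<a} \<partial>count_space {..<last mid})
      = ennreal (qzeta_term q ss mid)
        * ennreal (\<Sum>a<last mid. \<Sum>p<a. qzeta_factor q s a * qT_weight q (hd mid - p))"
      by (simp add: nn_integral_count_space_finite sum_nonneg flip: sum_distrib_left)
  qed
  finally show ?thesis .
qed

lemma qzeta_nn_Cons:
  assumes "ss \<noteq> []"
  shows "qzeta_nn q (s # ss) = (\<integral>\<^sup>+mid. ennreal (qzeta_term q ss mid) * tail_sum (qzeta_factor q s) (hd mid)
      \<partial>count_space (decreasing_lists 1 (length ss)))"
  using assms unfolding qzeta_nn_def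
  by (simp add: nn_integral_decreasing_lists_Cons ennreal_mult nn_integral_multc mult.commute)

lemma qzeta_nn_Cons_snoc:
  assumes "ss \<noteq> []"
  shows "qzeta_nn q (a # ss @ [b]) = (\<integral>\<^sup>+mid. ennreal (qzeta_term q ss mid)
      * (tail_sum (qzeta_factor q a) (hd mid) * ennreal (\<Sum>p\<in>{0<..<last mid}. qzeta_factor q b p))
      \<partial>count_space (decreasing_lists 1 (length ss)))"
proof -
  have "qzeta_nn q (a # ss @ [b]) = (\<integral>\<^sup>+mid. \<integral>\<^sup>+k. \<integral>\<^sup>+p.
      ennreal (qzeta_term q (a # ss @ [b]) (k # mid @ [p]))
      \<partial>count_space {1..<last mid} \<partial>count_space {hd mid<..} \<partial>count_space (decreasing_lists 1 (length ss)))"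
    using assms unfolding qzeta_nn_def by (simp add: nn_integral_decreasing_lists_Cons_snoc)
  also have "\<dots> = (\<integral>\<^sup>+mid. ennreal (qzeta_term q ss mid)
      * (tail_sum (qzeta_factor q a) (hd mid) * ennreal (\<Sum>p\<in>{0<..<last mid}. qzeta_factor q b p))
      \<partial>count_space (decreasing_lists 1 (length ss)))"
  proof (intro nn_integral_cong)
    fix mid assume "mid \<in> space (count_space (decreasing_lists 1 (length ss)))"
    then have "length mid = length ss"
      by (simp add: decreasing_lists_def)
    then have "ennreal (qzeta_term q (a # ss @ [b]) (k # mid @ [p]))
        = ennreal (qzeta_term q ss mid) * ennreal (qzeta_factor q a k) * ennreal (qzeta_factor q b p)" for k p
      by (simp add: qzeta_term_append mult_ac flip: ennreal_mult)
    moreover have "{1..<last mid} = {0<..<last mid}"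
      by auto
    ultimately show "(\<integral>\<^sup>+k. \<integral>\<^sup>+p. ennreal (qzeta_term q (a # ss @ [b]) (k # mid @ [p]))
        \<partial>count_space {1..<last mid} \<partial>count_space {hd mid<..})
      = ennreal (qzeta_term q ss mid)
        * (tail_sum (qzeta_factor q a) (hd mid) * ennreal (\<Sum>p\<in>{0<..<last mid}. qzeta_factor q b p))"
      by (simp add: nn_integral_count_space_finite nn_integral_cmult nn_integral_multc
          mult.assoc flip: sum_distrib_left)
  qed
  finally show ?thesis .
qed

lemma qzeta_nn_depth_two_formula:
  assumes "2 \<le> s"
  shows "qzeta_nn q [Suc s] = (\<Sum>j<s - 1. qzeta_nn q [s - j, j + 1])"
proof -
  have "{1::nat..} = {0<..}"
    by auto
  then show ?thesis
    using tail_sum_depth_two_formula[OF assms]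
      nn_integral_decreasing_lists_singleton[where b = 1] nn_integral_decreasing_lists_pair[where b = 1]
    by (simp add: qzeta_nn_def ennreal_mult numeral_2_eq_2)
qed

lemma qT_nn_rotate:
  assumes "0 < s" and "ss \<noteq> [] \<or> 2 \<le> s"
  shows "qT_nn q (s # ss) + (\<Sum>j<s - 1. qzeta_nn q ((s - j) # ss @ [j + 1]))
       = qzeta_nn q ((s + 1) # ss) + qT_nn q (ss @ [s])"
proof (cases "ss = []")
  case True
  then show ?thesis
    using assms(2) qzeta_nn_depth_two_formula by (simp add: add.commute)
next
  case False
  let ?P = "\<lambda>mid. ennreal (qzeta_term q ss mid)"
  let ?A = "\<lambda>mid. tail_sum (\<lambda>k. \<Sum>p<last mid. qzeta_factor q s k * qT_weight q (k - p)) (hd mid)"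
  let ?C = "\<lambda>j mid. tail_sum (qzeta_factor q (s - j)) (hd mid)
      * ennreal (\<Sum>p\<in>{0<..<last mid}. qzeta_factor q (j + 1) p)"
  let ?E = "\<lambda>mid. tail_sum (qzeta_factor q (Suc s)) (hd mid)"
  let ?B = "\<lambda>mid. ennreal (\<Sum>a<last mid. \<Sum>p<a. qzeta_factor q s a * qT_weight q (hd mid - p))"
  let ?D = "decreasing_lists 1 (length ss)"
  have "qT_nn q (s # ss) + (\<Sum>j<s - 1. qzeta_nn q ((s - j) # ss @ [j + 1]))
      = (\<integral>\<^sup>+mid. ?P mid * (?A mid + (\<Sum>j<s - 1. ?C j mid)) \<partial>count_space ?D)"
    using False by (simp add: qT_nn_Cons qzeta_nn_Cons_snoc nn_integral_add nn_integral_sum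
        distrib_left sum_distrib_left del: sum_ennreal)
  also have "\<dots> = (\<integral>\<^sup>+mid. ?P mid * (?E mid + ?B mid) \<partial>count_space ?D)"
  proof (intro nn_integral_cong)
    fix mid assume mid: "mid \<in> space (count_space ?D)"
    then have "mid \<noteq> []"
      using False by (auto simp: decreasing_lists_def)
    then have "0 < last mid" "last mid \<le> hd mid"
      using mid by (simp_all add: decreasing_lists_def Suc_le_eq sorted_wrt_greater_hd_last(2))
    then show "?P mid * (?A mid + (\<Sum>j<s - 1. ?C j mid)) = ?P mid * (?E mid + ?B mid)"
      using tail_sum_identity_summed[OF _ _ assms(1)] by simp
  qed
  also have "\<dots> = qzeta_nn q ((s + 1) # ss) + qT_nn q (ss @ [s])"
    using False by (simp add: qzeta_nn_Cons qT_nn_snoc nn_integral_add distrib_left)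
  finally show ?thesis .
qed

lemma qT_rotate:
  assumes "0 < s" and "\<exists>x\<in>set (s # ss). 1 < x"
  shows "qT q (s # ss) + (\<Sum>j<s - 1. qzeta q ((s - j) # ss @ [j + 1]))
       = qzeta q ((s + 1) # ss) + qT q (ss @ [s])"
proof -
  have "ss \<noteq> [] \<or> 2 \<le> s"
    using assms(2) by auto
  note rotate = arg_cong[OF qT_nn_rotate[OF assms(1) this], of enn2real]
  have zeta_finite: "qzeta_nn q ((s - j) # ss @ [j + 1]) < \<infinity>" if "j < s - 1" for j
    using that by (intro qzeta_nn_less_top) simp_all
  then have "(\<Sum>j<s - 1. qzeta q ((s - j) # ss @ [j + 1]))
      = enn2real (\<Sum>j<s - 1. qzeta_nn q ((s - j) # ss @ [j + 1]))"
    by (subst enn2real_sum) (auto simp: qzeta_eq_enn2real less_top intro!: sum.cong)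
  moreover have "qT_nn q (s # ss) < \<infinity>"
    by (rule qT_nn_less_top) (use assms(2) in auto)
  moreover have "qT_nn q (ss @ [s]) < \<infinity>"
    by (rule qT_nn_less_top) (use assms(2) in auto)
  moreover have "qzeta_nn q ((s + 1) # ss) < \<infinity>"
    using assms(1) by (intro qzeta_nn_less_top) simp_all
  ultimately show ?thesis
    using rotate zeta_finite
    by (simp add: qT_eq_enn2real qzeta_eq_enn2real enn2real_plus ennreal_sum_less_top less_top)
qed

end

theorem theorem5p5:
  fixes q :: real and s1 :: nat and ss :: "nat list"
  assumes "0 < q" and "q < 1"
    and "0 < s1" and "\<forall>x\<in>set ss. 0 < x"
    and "\<exists>x\<in>set (s1 # ss). 1 < x"
  shows "qT q (s1 # ss) - qT q (ss @ [s1]) =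
         qzeta q ((s1 + 1) # ss) - (\<Sum>k = 0..<s1 - 1. qzeta q ((s1 - k) # ss @ [k + 1]))"
  \<comment> \<open>The entries of ss need not be positive: they only enter through the common factor
    qzeta_term q ss mid of all four sums.\<close>
  using qT_rotate[OF assms(1,2,3,5)] by (simp add: atLeast0LessThan algebra_simps)

end
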